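(* Let $\Gamma = a : (\mathsf{Ref}~B)^{\diamond},\ b : (\mathsf{Ref}~B)^{\diamond},\ c : (\mathsf{Ref}~B)^{a,b}$, which is a well-formed context. Both $b$ and $c$ are valid qualifier differences between $c$ and $a$, i.e. each is a minimal qualifier $q$ with $\Gamma \vdash c <: a, q$. Moreover neither $\Gamma \vdash b <: c$ nor $\Gamma \vdash c <: b$ holds, so the two solutions are incomparable and no principal qualifier difference exists.
   Context: Setting: the reachability type system $\mathsf{G}^{\diamond}_{<:}$. Qualifiers are finite sets of variables possibly containing the freshness marker $\diamond$ (a fresh, unnamed location) and qualifier holes $\square$; $p,q$ denotes union. A context entry $x : T^{q}$ records the reachability qualifier $q$ of $x$. Subqualifying $\Gamma \vdash p <: q$ is generated by: transitivity; congruence ($p<:q$ and $r<:s$ give $p,r <: q,s$); subset inclusion ($p\subseteq q$ gives $p<:q$); variable expansion ($x : T^{q}\in\Gamma$ with $\diamond\notin q$ and $\square\notin q$ gives $x <: q$, and similarly for type-variable bounds); and self-reference packing ($f : F^{q}\in\Gamma$ gives $q\setminus\{\diamond,\square\} <: f$). $B$ is the base type and $\mathsf{Ref}$ the reference type. *)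

theory Defs
  imports Main
begin

type_synonym name = string

text \<open>Qualifier atoms: variables, the freshness marker (diamond), qualifier holes (square).\<close>
datatype qatom = QV name | QFresh | QHole

type_synonym qual = "qatom set"

text \<open>Types. TFun f x T q U r is the (self-referential) function type f(x : T^q) -> U^r,
  TAll f X T q U r the type abstraction f[X <: T^q] -> U^r.\<close>
datatype ty =
    TBase
  | TRef ty
  | TTVar name
  | TFun name name ty qual ty qual
  | TAll name name ty qual ty qual

fun is_fun_ty :: "ty \<Rightarrow> bool" where
  "is_fun_ty (TFun _ _ _ _ _ _) = True"
| "is_fun_ty (TAll _ _ _ _ _ _) = True"
| "is_fun_ty _ = False"

text \<open>Context entries: term variables x : T^q and type variables X <: T^q.\<close>
datatype bind = BVar name ty qual | BTVar name ty qual

type_synonym ctx = "bind list"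

fun bind_name :: "bind \<Rightarrow> name" where
  "bind_name (BVar x _ _) = x"
| "bind_name (BTVar x _ _) = x"

definition dom_ctx :: "ctx \<Rightarrow> name set" where
  "dom_ctx G = bind_name ` set G"

inductive subq :: "ctx \<Rightarrow> qual \<Rightarrow> qual \<Rightarrow> bool" where
  sq_trans: "subq G p q \<Longrightarrow> subq G q r \<Longrightarrow> subq G p r"
| sq_cong: "subq G p q \<Longrightarrow> subq G r s \<Longrightarrow> subq G (p \<union> r) (q \<union> s)"
| sq_sub: "p \<subseteq> q \<Longrightarrow> subq G p q"
| sq_var: "BVar x T q \<in> set G \<Longrightarrow> QFresh \<notin> q \<Longrightarrow> QHole \<notin> q \<Longrightarrow> subq G {QV x} q"
| sq_tvar: "BTVar x T q \<in> set G \<Longrightarrow> QFresh \<notin> q \<Longrightarrow> QHole \<notin> q \<Longrightarrow> subq G {QV x} q"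
| sq_self: "BVar f F q \<in> set G \<Longrightarrow> is_fun_ty F \<Longrightarrow> subq G (q - {QFresh, QHole}) {QV f}"

definition wf_qual :: "name set \<Rightarrow> qual \<Rightarrow> bool" where
  "wf_qual V q \<longleftrightarrow> finite q \<and> q \<subseteq> QV ` V \<union> {QFresh}"

fun wf_ty :: "name set \<Rightarrow> ty \<Rightarrow> bool" where
  "wf_ty V TBase = True"
| "wf_ty V (TRef T) = wf_ty V T"
| "wf_ty V (TTVar X) = (X \<in> V)"
| "wf_ty V (TFun f x T q U r) =
     (wf_ty V T \<and> wf_qual V q \<and> wf_ty (V \<union> {f, x}) U \<and> wf_qual (V \<union> {f, x}) r)"
| "wf_ty V (TAll f X T q U r) =
     (wf_ty V T \<and> wf_qual V q \<and> wf_ty (V \<union> {f, X}) U \<and> wf_qual (V \<union> {f, X}) r)"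

text \<open>Contexts are written left to right; later entries may refer to earlier ones.\<close>
inductive ctx_wf :: "ctx \<Rightarrow> bool" where
  wf_nil: "ctx_wf []"
| wf_var: "ctx_wf G \<Longrightarrow> x \<notin> dom_ctx G \<Longrightarrow> wf_ty (dom_ctx G) T \<Longrightarrow> wf_qual (dom_ctx G) q
           \<Longrightarrow> ctx_wf (G @ [BVar x T q])"
| wf_tvar: "ctx_wf G \<Longrightarrow> x \<notin> dom_ctx G \<Longrightarrow> wf_ty (dom_ctx G) T \<Longrightarrow> wf_qual (dom_ctx G) q
           \<Longrightarrow> ctx_wf (G @ [BTVar x T q])"

definition qual_diff :: "ctx \<Rightarrow> qual \<Rightarrow> qual \<Rightarrow> qual \<Rightarrow> bool" where
  "qual_diff G p r q \<longleftrightarrow>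
     finite q \<and> subq G p (r \<union> q) \<and>
     (\<forall>q'. finite q' \<and> subq G p (r \<union> q') \<and> subq G q' q \<longrightarrow> subq G q q')"

definition principal_qual_diff :: "ctx \<Rightarrow> qual \<Rightarrow> qual \<Rightarrow> qual \<Rightarrow> bool" where
  "principal_qual_diff G p r q \<longleftrightarrow>
     qual_diff G p r q \<and> (\<forall>q'. qual_diff G p r q' \<longrightarrow> subq G q q')"

definition Gamma_ex :: ctx where
  "Gamma_ex = [BVar ''a'' (TRef TBase) {QFresh},
               BVar ''b'' (TRef TBase) {QFresh},
               BVar ''c'' (TRef TBase) {QV ''a'', QV ''b''}]"

end

theory Submission
  imports Defs
begin

text \<open>Under \<open>Gamma_ex\<close>, subqualifying is exactly inclusion into the closure that adds \<open>c\<close>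
  whenever both \<open>a\<close> and \<open>b\<close> are present: \<open>c\<close> expands to \<open>a, b\<close>, while \<open>a\<close> and \<open>b\<close> are fresh
  and cannot be expanded. Hence \<open>c <: a, q\<close> holds iff \<open>q\<close> contains \<open>b\<close> or \<open>c\<close>. Both \<open>{b}\<close> and
  \<open>{c}\<close> are therefore minimal solutions; they are incomparable, so a principal solution would
  lie below both, i.e. be empty, and the empty qualifier is not a solution.\<close>

lemma subq_imp_subset_closure:
  assumes "subq G p q"
    and mono: "\<And>p q. p \<subseteq> q \<Longrightarrow> cl p \<subseteq> cl q"
    and extensive: "\<And>q. q \<subseteq> cl q"
    and idem: "\<And>q. cl (cl q) \<subseteq> cl q"
    and var: "\<And>x T r. BVar x T r \<in> set G \<Longrightarrow> QFresh \<notin> r \<Longrightarrow> QHole \<notin> r \<Longrightarrow> QV x \<in> cl r"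
    and tvar: "\<And>x T r. BTVar x T r \<in> set G \<Longrightarrow> QFresh \<notin> r \<Longrightarrow> QHole \<notin> r \<Longrightarrow> QV x \<in> cl r"
    and self: "\<And>f F r. BVar f F r \<in> set G \<Longrightarrow> is_fun_ty F \<Longrightarrow> r - {QFresh, QHole} \<subseteq> cl {QV f}"
  shows "p \<subseteq> cl q"
  using assms(1) var tvar self
proof (induction rule: subq.induct)
  case (sq_trans G p q r)
  then show ?case using mono idem by blast
next
  case (sq_cong G p q r s)
  then show ?case using mono[of q "q \<union> s"] mono[of s "q \<union> s"] by blast
next
  case (sq_sub p q G)
  then show ?case using extensive by blast
qed blast+

definition Gamma_ex_closure :: "qual \<Rightarrow> qual" where
  "Gamma_ex_closure q = q \<union> (if QV ''a'' \<in> q \<and> QV ''b'' \<in> q then {QV ''c''} else {})"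

lemma subq_Gamma_ex_iff: "subq Gamma_ex p q \<longleftrightarrow> p \<subseteq> Gamma_ex_closure q"
proof
  assume "subq Gamma_ex p q"
  then show "p \<subseteq> Gamma_ex_closure q"
    by (rule subq_imp_subset_closure) (auto simp: Gamma_ex_closure_def Gamma_ex_def split: if_splits)
next
  assume p: "p \<subseteq> Gamma_ex_closure q"
  show "subq Gamma_ex p q"
  proof (cases "QV ''a'' \<in> q \<and> QV ''b'' \<in> q")
    case True
    have "subq Gamma_ex {QV ''c''} {QV ''a'', QV ''b''}"
      by (rule sq_var[where T = "TRef TBase"]) (auto simp: Gamma_ex_def)
    then have "subq Gamma_ex {QV ''c''} q"
      using True by (blast intro: sq_trans sq_sub)
    then have "subq Gamma_ex (q \<union> {QV ''c''}) (q \<union> q)"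
      by (blast intro: sq_cong sq_sub)
    moreover have "p \<subseteq> q \<union> {QV ''c''}"
      using p True by (simp add: Gamma_ex_closure_def)
    ultimately show ?thesis
      by (auto intro: sq_trans sq_sub)
  next
    case False
    then have "p \<subseteq> q"
      using p unfolding Gamma_ex_closure_def by auto
    then show ?thesis
      by (rule sq_sub)
  qed
qed

lemma subq_Gamma_ex_singleton_iff: "subq Gamma_ex p {x} \<longleftrightarrow> p \<subseteq> {x}"
  by (auto simp: subq_Gamma_ex_iff Gamma_ex_closure_def)

lemma subq_Gamma_ex_c_a_iff:
  "subq Gamma_ex {QV ''c''} ({QV ''a''} \<union> q) \<longleftrightarrow> QV ''b'' \<in> q \<or> QV ''c'' \<in> q"
  by (auto simp: subq_Gamma_ex_iff Gamma_ex_closure_def)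

lemma qual_diff_Gamma_ex_c_a:
  assumes "x \<in> {QV ''b'', QV ''c''}"
  shows "qual_diff Gamma_ex {QV ''c''} {QV ''a''} {x}"
  using assms unfolding qual_diff_def subq_Gamma_ex_singleton_iff subq_Gamma_ex_c_a_iff
  by (auto intro!: sq_sub)

lemma ctx_wf_Gamma_ex: "ctx_wf Gamma_ex"
proof -
  have Gamma_ex_snoc: "Gamma_ex = (([] @ [BVar ''a'' (TRef TBase) {QFresh}]) @ [BVar ''b'' (TRef TBase) {QFresh}])
     @ [BVar ''c'' (TRef TBase) {QV ''a'', QV ''b''}]"
    by (simp add: Gamma_ex_def)
  show ?thesis
    unfolding Gamma_ex_snoc by (intro wf_var wf_nil) (auto simp: dom_ctx_def wf_qual_def)
qed

theorem mainTheorem1: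
  shows "ctx_wf Gamma_ex
    \<and> qual_diff Gamma_ex {QV ''c''} {QV ''a''} {QV ''b''}
    \<and> qual_diff Gamma_ex {QV ''c''} {QV ''a''} {QV ''c''}
    \<and> \<not> subq Gamma_ex {QV ''b''} {QV ''c''}
    \<and> \<not> subq Gamma_ex {QV ''c''} {QV ''b''}
    \<and> \<not> (\<exists>q. principal_qual_diff Gamma_ex {QV ''c''} {QV ''a''} q)"
proof -
  have b: "qual_diff Gamma_ex {QV ''c''} {QV ''a''} {QV ''b''}"
    and c: "qual_diff Gamma_ex {QV ''c''} {QV ''a''} {QV ''c''}"
    by (simp_all add: qual_diff_Gamma_ex_c_a)
  have "\<not> principal_qual_diff Gamma_ex {QV ''c''} {QV ''a''} q" for q
  proof
    assume q: "principal_qual_diff Gamma_ex {QV ''c''} {QV ''a''} q"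
    then have "subq Gamma_ex q {QV ''b''}" "subq Gamma_ex q {QV ''c''}"
      using b c by (simp_all add: principal_qual_diff_def)
    then have "q \<subseteq> {QV ''b''}" "q \<subseteq> {QV ''c''}"
      by (simp_all add: subq_Gamma_ex_singleton_iff)
    moreover have "QV ''b'' \<in> q \<or> QV ''c'' \<in> q"
      using q unfolding principal_qual_diff_def qual_diff_def subq_Gamma_ex_c_a_iff by blast
    ultimately show False by blast
  qed
  then show ?thesis
    using ctx_wf_Gamma_ex b c by (simp add: subq_Gamma_ex_singleton_iff)
qed

end
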